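(* Let $\lambda>0$ and $\theta\in(0,1]$ with $\lambda\theta\in(0,1]$, and let $(X_t)_{t\ge0}$ be the free Jacobi process with parameters $(\lambda,\theta)$. For each $t\ge 0$ let $\mathcal{S}_t^{(\lambda,\theta)}$ be its $S$ transform (defined below). Then, locally around the origin $z=0$, $$\partial_t \mathcal{S}_t^{(\lambda,\theta)}(z)=(2\lambda\theta z+1)\,\mathcal{S}_t^{(\lambda,\theta)}(z)-\theta(1+2\lambda z)\big[\mathcal{S}_t^{(\lambda,\theta)}(z)\big]^2-\frac{\theta z(1+\lambda z)}{2}\,\partial_z\Big(\big[\mathcal{S}_t^{(\lambda,\theta)}\big]^2\Big)(z).$$
   Context: Free Jacobi process: in a tracial $W^*$-probability space $(\mathcal A,\tau)$, let $P,Q$ be orthogonal projections with $\tau(P)=\lambda\theta$, $\tau(Q)=\theta$, and let $(Y_t)_{t\ge0}$ be a free unitary Brownian motion, with $P,Q,(Y_t)$ free. Set $X_t=PY_tQY_t^*P$, viewed as an element of the compressed space $(P\mathcal AP,\tau/\tau(P))$. Its moments are $m_n(t)=\tau(X_t^n)/\tau(P)$, and its moment generating function is $\mathcal M_t^{(\lambda,\theta)}(z)=\sum_{n\ge0}m_n(t)z^n$. It is known that $\mathcal M_t^{(\lambda,\theta)}$ satisfies $$\partial_t\mathcal M_t^{(\lambda,\theta)}=-z\,\partial_z\Big\{[(1-2\lambda\theta)-\theta(1-\lambda)z]\mathcal M_t^{(\lambda,\theta)}+\lambda\theta(1-z)[\mathcal M_t^{(\lambda,\theta)}]^2\Big\}.$$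 Let $\psi_t^{(\lambda,\theta)}=\mathcal M_t^{(\lambda,\theta)}-1$; since $m_1(t)\neq0$, $\psi_t$ has a local inverse $\eta_t^{(\lambda,\theta)}$ near $0$. The $S$ transform is $\mathcal S_t^{(\lambda,\theta)}(z)=\frac{1+z}{z}\eta_t^{(\lambda,\theta)}(z)$, extended analytically to $z=0$. *)

theory Defs
  imports "HOL-Complex_Analysis.Complex_Analysis"
begin

definition mgf :: "(nat \<Rightarrow> real \<Rightarrow> real) \<Rightarrow> real \<Rightarrow> complex \<Rightarrow> complex" where
  "mgf m t z = (\<Sum>n. complex_of_real (m n t) * z ^ n)"

text \<open>Right-hand side of the known evolution equation of the moment generating function
  of the free Jacobi process with parameters (lam, th):
  -z d/dz { [(1 - 2 lam th) - th (1 - lam) z] M + lam th (1 - z) M^2 }.\<close>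
definition jacobi_mgf_rhs :: "real \<Rightarrow> real \<Rightarrow> (complex \<Rightarrow> complex) \<Rightarrow> complex \<Rightarrow> complex" where
  "jacobi_mgf_rhs lam th M z =
     - z * deriv (\<lambda>w. (complex_of_real (1 - 2*lam*th) - complex_of_real (th*(1-lam)) * w) * M w
                     + complex_of_real (lam*th) * (1 - w) * (M w)^2) z"

text \<open>S is (on the time-window T and the disc ball 0 r) the S transform of the family M:
  for each t in T, S t is holomorphic near 0 and  eta_t(z) = z S_t(z)/(1+z)  is an inverse
  of psi_t = M_t - 1, i.e. psi_t(eta_t(z)) = z.  (This determines S t uniquely on ball 0 r:
  eta_t is then the analytic local inverse of psi_t at 0, and S t 0 is the analytic extension.)\<close>
definition is_S_transform_on ::
  "(real \<Rightarrow> complex \<Rightarrow> complex) \<Rightarrow> real set \<Rightarrow> real \<Rightarrow> (real \<Rightarrow> complex \<Rightarrow> complex) \<Rightarrow> bool" where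
  "is_S_transform_on M T r S \<longleftrightarrow>
     (\<forall>t\<in>T. S t holomorphic_on ball 0 r \<and>
        (\<forall>z\<in>ball 0 r. M t (z * S t z / (1 + z)) - 1 = z))"

end

theory Submission
  imports Defs
begin

text \<open>Near \<open>t0\<close> the derivative of \<open>psi s = mgf m s - 1\<close>
  stays close to \<open>m 1 s\<close>, which is bounded away from \<open>0\<close>, so a quantitative inverse function
  theorem (a contraction argument) inverts \<open>psi s\<close> on a disc whose radius is uniform in \<open>s\<close>;
  \<open>S s z = (1 + z) * eta s z / z\<close> for this inverse \<open>eta s\<close>, and by connectedness every S transform
  agrees with it. Cauchy estimates turn the evolution equation of \<open>mgf m\<close> into a uniform
  second-order Taylor expansion in time, so differentiating \<open>psi s (eta s z) = z\<close> in \<open>s\<close> gives the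
  time derivative of \<open>eta\<close> (and, at \<open>z = 0\<close>, the equation \<open>m 1' = th - m 1\<close>). Substituting into
  \<open>S = (1 + z) * eta / z\<close> and using \<open>mgf m t (eta t z) = 1 + z\<close>, the equation of \<open>mgf m\<close> becomes
  the stated one by a field computation.\<close>

lemma vector_differentiable_bound:
  fixes f :: "real \<Rightarrow> 'b::real_normed_vector"
  assumes "convex S" and "\<And>x. x \<in> S \<Longrightarrow> (f has_vector_derivative f' x) (at x within S)"
    and "\<And>x. x \<in> S \<Longrightarrow> norm (f' x) \<le> B" and "x \<in> S" "y \<in> S"
  shows "norm (f x - f y) \<le> B * \<bar>x - y\<bar>"
proof -
  have "norm (f x - f y) \<le> B * norm (x - y)"
  proof (rule differentiable_bound[where f'="\<lambda>x h. h *\<^sub>R f' x"])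
    show "(f has_derivative (\<lambda>h. h *\<^sub>R f' z)) (at z within S)" if "z \<in> S" for z
      using assms(2)[OF that] by (simp add: has_vector_derivative_def)
    show "onorm (\<lambda>h. h *\<^sub>R f' z) \<le> B" if "z \<in> S" for z
      using onorm_scaleR_left[of "\<lambda>x. x" "f' z"] assms(3)[OF that]
      by (simp add: onorm_id bounded_linear_ident)
  qed (use assms in auto)
  then show ?thesis by simp
qed

lemma has_vector_derivative_remainder_bound:
  fixes f :: "real \<Rightarrow> 'a::real_normed_vector"
  assumes "eventually (\<lambda>s. norm (f s - f t - (s - t) *\<^sub>R D) \<le> \<bar>s - t\<bar> * \<phi> s) (at t within S)"
    and "(\<phi> \<longlongrightarrow> 0) (at t within S)"
  shows "(f has_vector_derivative D) (at t within S)"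
  unfolding has_vector_derivative_def has_derivative_within_alt2
proof (intro conjI allI impI)
  show "bounded_linear (\<lambda>h. h *\<^sub>R D)" by (rule bounded_linear_scaleR_left)
  fix e :: real assume "e > 0"
  with assms(2) have "eventually (\<lambda>s. \<phi> s < e) (at t within S)" by (rule order_tendstoD(2))
  with assms(1) show "eventually (\<lambda>s. norm (f s - f t - (s - t) *\<^sub>R D) \<le> e * norm (s - t)) (at t within S)"
  proof eventually_elim
    case (elim s)
    have "\<bar>s - t\<bar> * \<phi> s \<le> \<bar>s - t\<bar> * e" using elim(2) by (intro mult_left_mono) auto
    then show ?case using elim(1) by (simp add: mult.commute)
  qed
qed

lemma Cauchy_deriv_bound_disc:
  assumes H: "H holomorphic_on ball 0 R" and r: "0 \<le> r" "r < r'" "r' < R"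
    and bound: "\<And>w. norm w \<le> r' \<Longrightarrow> norm (H w) \<le> B" and w: "norm w \<le> r"
  shows "norm ((deriv ^^ n) H w) \<le> fact n * B / (r' - r)^n"
proof (rule Cauchy_inequality)
  have sub: "cball w (r' - r) \<subseteq> ball 0 R"
  proof
    fix x assume "x \<in> cball w (r' - r)"
    then have "norm (x - w) \<le> r' - r" by (simp add: dist_norm norm_minus_commute)
    then show "x \<in> ball 0 R" using w r norm_triangle_ineq2[of x w] by simp
  qed
  show "H holomorphic_on ball w (r' - r)"
    using H sub ball_subset_cball by (blast intro: holomorphic_on_subset)
  show "continuous_on (cball w (r' - r)) H"
    using holomorphic_on_imp_continuous_on[OF H] sub by (blast intro: continuous_on_subset)
  show "norm (H x) \<le> B" if "norm (w - x) = r' - r" for x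
    using that w norm_triangle_ineq2[of x w] by (intro bound) (simp add: norm_minus_commute)
qed (use r in simp)

lemma Cauchy_first_deriv_bound_disc:
  assumes "H holomorphic_on ball 0 R" "0 \<le> r" "r < r'" "r' < R"
    and "\<And>w. norm w \<le> r' \<Longrightarrow> norm (H w) \<le> B" and "norm w \<le> r"
  shows "norm (deriv H w) \<le> B / (r' - r)"
  using Cauchy_deriv_bound_disc[OF assms, of 1] by simp

context
  fixes c :: "nat \<Rightarrow> complex"
  assumes coeffs_le_1: "\<And>n. norm (c n) \<le> 1"
begin

lemma summable_norm_powser_coeffs_le_1:
  assumes "norm z < 1"
  shows "summable (\<lambda>n. norm (c n * z^n))"
proof (rule summable_comparison_test')
  show "summable (\<lambda>n. norm z ^ n)" using assms by (simp add: summable_geometric)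
  show "norm (norm (c n * z^n)) \<le> norm z ^ n" for n
    using coeffs_le_1[of n] by (simp add: norm_mult norm_power mult_left_le_one_le)
qed

lemma norm_powser_coeffs_le_1:
  assumes "norm z < 1"
  shows "norm (\<Sum>n. c n * z^n) \<le> 1 / (1 - norm z)"
proof -
  have "norm (\<Sum>n. c n * z^n) \<le> (\<Sum>n. norm (c n * z^n))"
    using summable_norm_powser_coeffs_le_1[OF assms] by (rule summable_norm)
  also have "\<dots> \<le> (\<Sum>n. norm z ^ n)"
    using assms coeffs_le_1 summable_norm_powser_coeffs_le_1[OF assms]
    by (intro suminf_le) (auto simp: norm_mult norm_power mult_left_le_one_le summable_geometric)
  also have "\<dots> = 1 / (1 - norm z)" using assms by (simp add: suminf_geometric)
  finally show ?thesis .
qed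

lemma has_field_derivative_powser_coeffs_le_1:
  assumes "norm z < 1"
  shows "((\<lambda>z. \<Sum>n. c n * z^n) has_field_derivative (\<Sum>n. diffs c n * z^n)) (at z)"
  using summable_norm_powser_coeffs_le_1 assms
  by (intro termdiffs_strong'[where K=1]) (auto intro: summable_norm_cancel)

lemma holomorphic_powser_coeffs_le_1: "(\<lambda>z. \<Sum>n. c n * z^n) holomorphic_on ball 0 1"
  unfolding holomorphic_on_def field_differentiable_def
  using has_field_derivative_powser_coeffs_le_1 has_field_derivative_at_within by fastforce

lemma deriv_powser_coeffs_le_1_at_0: "deriv (\<lambda>z. \<Sum>n. c n * z^n) 0 = c 1"
proof -
  have "deriv (\<lambda>z. \<Sum>n. c n * z^n) 0 = (\<Sum>n. diffs c n * 0^n)"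
    by (rule DERIV_imp_deriv, rule has_field_derivative_powser_coeffs_le_1) simp
  also have "\<dots> = c 1" by (simp add: powser_zero diffs_def)
  finally show ?thesis .
qed

end

locale local_inverse =
  fixes f :: "complex \<Rightarrow> complex" and a :: complex and \<rho> \<epsilon> :: real
  assumes holomorphic_f: "f holomorphic_on ball 0 1" and f_0: "f 0 = 0" and deriv_f_0: "deriv f 0 = a"
    and a_nonzero: "a \<noteq> 0" and rho: "0 < \<rho>" "\<rho> < 1"
    and deriv_f_close: "\<And>w. w \<in> cball 0 \<rho> \<Longrightarrow> norm (deriv f w - a) \<le> norm a / 2"
    and eps: "0 < \<epsilon>" "\<epsilon> \<le> \<rho> * norm a / 4" "\<epsilon> < 1"
begin

definition finv :: "complex \<Rightarrow> complex" where
  "finv = inv_into (ball 0 \<rho>) f"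

lemma has_field_derivative_f: "norm w < 1 \<Longrightarrow> (f has_field_derivative deriv f w) (at w)"
  using holomorphic_f holomorphic_derivI[of f "ball 0 1" w] by simp

lemma f_minus_linear_lipschitz:
  assumes "x \<in> cball 0 \<rho>" "y \<in> cball 0 \<rho>"
  shows "norm ((f x - a * x) - (f y - a * y)) \<le> norm a / 2 * norm (x - y)"
proof (rule field_differentiable_bound[where f'="\<lambda>w. deriv f w - a"])
  show "((\<lambda>w. f w - a * w) has_field_derivative deriv f z - a) (at z within cball 0 \<rho>)"
    if "z \<in> cball 0 \<rho>" for z
  proof -
    have "norm z < 1" using that rho by auto
    then show ?thesis
      by (intro DERIV_diff has_field_derivative_at_within[OF has_field_derivative_f] DERIV_cmult_Id)
  qed
qed (use deriv_f_close assms in auto)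

lemma f_expansive:
  assumes "x \<in> cball 0 \<rho>" "y \<in> cball 0 \<rho>"
  shows "norm a / 2 * norm (x - y) \<le> norm (f x - f y)"
proof -
  have "norm (a * (x - y)) - norm (f x - f y) \<le> norm ((f x - a * x) - (f y - a * y))"
    using norm_triangle_ineq3[of "a * (x - y)" "f x - f y"]
    by (simp add: algebra_simps norm_minus_commute)
  then show ?thesis using f_minus_linear_lipschitz[OF assms] by (simp add: norm_mult)
qed

lemma inj_on_f: "inj_on f (cball 0 \<rho>)"
proof (rule inj_onI)
  fix x y assume "x \<in> cball 0 \<rho>" "y \<in> cball 0 \<rho>" "f x = f y"
  then have "norm a / 2 * norm (x - y) \<le> 0" using f_expansive by fastforce
  then show "x = y" using a_nonzero by (simp add: mult_le_0_iff)
qed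

text \<open>The preimage is the fixed point of the contraction \<open>w \<mapsto> w - (f w - z) / a\<close>
  of ratio \<open>1/2\<close>; it lies in the half-radius disc, so it is also found in the open disc.\<close>

lemma f_preimage_in_ball:
  assumes z: "z \<in> ball 0 \<epsilon>"
  shows "z \<in> f ` ball 0 \<rho>"
proof -
  define \<Phi> where "\<Phi> = (\<lambda>w. w - (f w - z) / a)"
  have contraction: "dist (\<Phi> x) (\<Phi> y) \<le> 1/2 * dist x y" if "x \<in> cball 0 \<rho>" "y \<in> cball 0 \<rho>" for x y
  proof -
    have "\<Phi> x - \<Phi> y = - (((f x - a * x) - (f y - a * y)) / a)"
      unfolding \<Phi>_def using a_nonzero by (simp add: field_simps)
    then have "norm (\<Phi> x - \<Phi> y) = norm ((f x - a * x) - (f y - a * y)) / norm a"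
      by (simp add: norm_divide)
    also have "\<dots> \<le> (norm a / 2 * norm (x - y)) / norm a"
      using f_minus_linear_lipschitz[OF that] by (intro divide_right_mono) auto
    finally show ?thesis using a_nonzero by (simp add: dist_norm)
  qed
  have maps_to: "\<Phi> ` cball 0 \<rho> \<subseteq> cball 0 \<rho>"
  proof
    fix y assume "y \<in> \<Phi> ` cball 0 \<rho>"
    then obtain x where x: "x \<in> cball 0 \<rho>" and y: "y = \<Phi> x" by auto
    have "norm (\<Phi> x) \<le> norm (\<Phi> x - \<Phi> 0) + norm (\<Phi> 0)" by (metis norm_triangle_ineq diff_add_cancel)
    also have "norm (\<Phi> x - \<Phi> 0) \<le> 1/2 * norm x" using contraction[OF x, of 0] rho by (simp add: dist_norm)
    also have "\<Phi> 0 = z / a" unfolding \<Phi>_def by (simp add: f_0)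
    also have "norm (z / a) \<le> \<rho> / 4"
    proof -
      have "norm z \<le> \<rho> * norm a / 4" using z eps by simp
      then show ?thesis using a_nonzero by (simp add: norm_divide field_simps)
    qed
    finally have "norm (\<Phi> x) \<le> \<rho>" using x rho by simp
    then show "y \<in> cball 0 \<rho>" using y by simp
  qed
  obtain w where w: "w \<in> cball 0 \<rho>" "\<Phi> w = w"
    using Banach_fix[of "cball 0 \<rho>" "1/2" \<Phi>] maps_to contraction rho
    by (auto simp: complete_eq_closed)
  then have fw: "f w = z" unfolding \<Phi>_def using a_nonzero by (simp add: field_simps)
  have "norm a / 2 * norm w \<le> norm z" using f_expansive[OF w(1), of 0] rho f_0 fw by simp
  also have "\<dots> \<le> \<rho> * norm a / 4" using z eps by simp
  also have "\<dots> = norm a / 2 * (\<rho> / 2)" by simp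
  finally have "norm w \<le> \<rho> / 2" using a_nonzero by simp
  with fw rho show ?thesis by force
qed

lemma finv_in_ball: "z \<in> ball 0 \<epsilon> \<Longrightarrow> finv z \<in> ball 0 \<rho>"
  unfolding finv_def by (rule inv_into_into[OF f_preimage_in_ball])

lemma f_finv: "z \<in> ball 0 \<epsilon> \<Longrightarrow> f (finv z) = z"
  unfolding finv_def by (rule f_inv_into_f[OF f_preimage_in_ball])

lemma finv_f: "w \<in> ball 0 \<rho> \<Longrightarrow> finv (f w) = w"
  unfolding finv_def using inj_on_subset[OF inj_on_f, of "ball 0 \<rho>"] by (auto intro: inv_into_f_f)

lemma deriv_f_nonzero: "w \<in> cball 0 \<rho> \<Longrightarrow> deriv f w \<noteq> 0"
  using deriv_f_close a_nonzero by force

lemma has_field_derivative_finv: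
  assumes z: "z \<in> ball 0 \<epsilon>"
  shows "(finv has_field_derivative inverse (deriv f (finv z))) (at z)"
proof -
  have "(finv has_field_derivative inverse (deriv f (finv z))) (at (f (finv z)))"
  proof (rule has_field_derivative_inverse_strong[where S="ball 0 \<rho>" and f=f and x="finv z"])
    show "(f has_field_derivative deriv f (finv z)) (at (finv z))"
      using finv_in_ball[OF z] rho by (intro has_field_derivative_f) auto
    show "deriv f (finv z) \<noteq> 0" using finv_in_ball[OF z] by (intro deriv_f_nonzero) auto
    show "continuous_on (ball 0 \<rho>) f"
      using rho by (intro continuous_on_subset[OF holomorphic_on_imp_continuous_on[OF holomorphic_f]]) auto
  qed (use finv_in_ball[OF z] finv_f in auto)
  then show ?thesis using f_finv[OF z] by simp
qed

lemma holomorphic_finv: "finv holomorphic_on ball 0 \<epsilon>"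
  unfolding holomorphic_on_def field_differentiable_def
  using has_field_derivative_finv has_field_derivative_at_within by fastforce

lemma finv_0: "finv 0 = 0"
  using finv_f[of 0] rho f_0 by simp

lemma deriv_finv_0: "deriv finv 0 = inverse a"
  using has_field_derivative_finv[of 0] eps by (simp add: DERIV_imp_deriv finv_0 deriv_f_0)

text \<open>Uniqueness of the inverse follows by connectedness of the disc: the set where \<open>\<eta>\<close> lands
  in \<open>ball 0 \<rho>\<close> is open, and it is also the (closed) set where \<open>\<eta> = finv\<close>.\<close>

lemma continuous_right_inverse_eq_finv:
  assumes cont: "continuous_on (ball 0 \<epsilon>) \<eta>" and "\<eta> 0 = 0"
    and inverse: "\<And>z. z \<in> ball 0 \<epsilon> \<Longrightarrow> f (\<eta> z) = z" and z: "z \<in> ball 0 \<epsilon>"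
  shows "\<eta> z = finv z"
proof -
  define U where "U = ball 0 \<epsilon> \<inter> \<eta> -` ball 0 \<rho>"
  have open_U: "openin (top_of_set (ball 0 \<epsilon>)) U"
    unfolding U_def by (rule continuous_openin_preimage_gen[OF cont]) simp
  have U_eq: "U = {z \<in> ball 0 \<epsilon>. \<eta> z - finv z = 0}"
  proof (intro set_eqI iffI)
    fix z assume "z \<in> U"
    then have "z \<in> ball 0 \<epsilon>" "\<eta> z \<in> ball 0 \<rho>" by (simp_all add: U_def)
    then have "\<eta> z = finv z" using finv_f[of "\<eta> z"] inverse[of z] by simp
    then show "z \<in> {z \<in> ball 0 \<epsilon>. \<eta> z - finv z = 0}" using \<open>z \<in> ball 0 \<epsilon>\<close> by simp
  next
    fix z assume "z \<in> {z \<in> ball 0 \<epsilon>. \<eta> z - finv z = 0}"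
    then have "z \<in> ball 0 \<epsilon>" "\<eta> z = finv z" by auto
    then show "z \<in> U" using finv_in_ball[of z] by (simp add: U_def)
  qed
  have closed_U: "closedin (top_of_set (ball 0 \<epsilon>)) U"
    unfolding U_eq
    by (rule continuous_closedin_preimage_constant)
       (rule continuous_on_diff[OF cont holomorphic_on_imp_continuous_on[OF holomorphic_finv]])
  have "0 \<in> U" using \<open>\<eta> 0 = 0\<close> eps rho by (simp add: U_def)
  then have "U = ball 0 \<epsilon>"
    using connected_clopen[of "ball (0::complex) \<epsilon>"] connected_ball open_U closed_U by blast
  then have "z \<in> U" using z by simp
  then show ?thesis unfolding U_eq by simp
qed

text \<open>The S transform of the inverse, \<open>(1 + z) * finv z / z\<close>, continued to \<open>0\<close> by its limit
  \<open>1 / deriv finv 0 = 1 / a\<close>.\<close>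

definition strans :: "complex \<Rightarrow> complex" where
  "strans z = (1 + z) * (if z = 0 then inverse a else finv z / z)"

lemma holomorphic_strans: "strans holomorphic_on ball 0 \<epsilon>"
proof -
  have "(\<lambda>z. if z = 0 then deriv finv 0 else (finv z - finv 0) / (z - 0)) holomorphic_on ball 0 \<epsilon>"
    by (rule pole_lemma[OF holomorphic_finv]) (use eps in simp)
  moreover have "(\<lambda>z. if z = 0 then deriv finv 0 else (finv z - finv 0) / (z - 0))
      = (\<lambda>z. if z = 0 then inverse a else finv z / z)"
    by (rule ext) (simp add: deriv_finv_0 finv_0)
  ultimately have "(\<lambda>z. if z = 0 then inverse a else finv z / z) holomorphic_on ball 0 \<epsilon>"
    by simp
  then show ?thesis unfolding strans_def[abs_def] by (intro holomorphic_intros)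
qed

lemma one_plus_nonzero: "(z::complex) \<in> ball 0 \<epsilon> \<Longrightarrow> 1 + z \<noteq> 0"
proof
  assume "z \<in> ball 0 \<epsilon>" "1 + z = 0"
  then have "z = -1" "norm z < \<epsilon>" by (simp_all add: add_eq_0_iff)
  with eps show False by simp
qed

lemma strans_eq_finv: "z \<in> ball 0 \<epsilon> \<Longrightarrow> z * strans z / (1 + z) = finv z"
  using one_plus_nonzero[of z] finv_0 by (auto simp: strans_def)

lemma f_strans: "z \<in> ball 0 \<epsilon> \<Longrightarrow> f (z * strans z / (1 + z)) = z"
  using strans_eq_finv f_finv by simp

lemma strans_unique:
  assumes holo: "S holomorphic_on ball 0 \<epsilon>"
    and inverse: "\<And>z. z \<in> ball 0 \<epsilon> \<Longrightarrow> f (z * S z / (1 + z)) = z" and z: "z \<in> ball 0 \<epsilon>"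
  shows "S z = strans z"
proof -
  have cont: "continuous_on (ball 0 \<epsilon>) S" by (rule holomorphic_on_imp_continuous_on[OF holo])
  have off_0: "S z = strans z" if "z \<in> ball 0 \<epsilon>" "z \<noteq> 0" for z
  proof -
    have "z * S z / (1 + z) = finv z"
      using cont
      by (intro continuous_right_inverse_eq_finv inverse that continuous_intros)
         (auto simp: one_plus_nonzero)
    then have "z * S z / (1 + z) = z * strans z / (1 + z)" using strans_eq_finv[OF that(1)] by simp
    then show ?thesis using that(2) one_plus_nonzero[OF that(1)] by simp
  qed
  have "S 0 = strans 0"
  proof -
    have "(0::complex) \<in> ball 0 \<epsilon>" using eps by simp
    then have "(S \<longlongrightarrow> S 0) (at 0)" "(strans \<longlongrightarrow> strans 0) (at 0)"
      using cont holomorphic_on_imp_continuous_on[OF holomorphic_strans]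
      by (simp_all add: continuous_on_eq_continuous_at isCont_def)
    moreover have "eventually (\<lambda>z. strans z = S z) (at (0::complex))"
      unfolding eventually_at using eps by (intro exI[of _ \<epsilon>]) (auto simp: off_0 dist_norm)
    ultimately have "(S \<longlongrightarrow> strans 0) (at 0)" "(S \<longlongrightarrow> S 0) (at 0)"
      using tendsto_cong[of strans S] by simp_all
    then show ?thesis using tendsto_unique[OF at_neq_bot] by blast
  qed
  then show ?thesis using off_0 z by (cases "z = 0") auto
qed

lemma deriv_strans_squared:
  assumes z: "z \<in> ball 0 \<epsilon>" and z_nonzero: "z \<noteq> 0"
  shows "deriv (\<lambda>v. (strans v)^2) z
     = 2 * ((1 + z) * (finv z / z)) * (- finv z / z^2 + (1 + z) / (z * deriv f (finv z)))"
proof (rule DERIV_imp_deriv)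
  let ?p = "deriv f (finv z)"
  have "?p \<noteq> 0" using deriv_f_nonzero finv_in_ball[OF z] by auto
  have "((\<lambda>v. finv v / v) has_field_derivative (inverse ?p * z - finv z * 1) / (z * z)) (at z)"
    by (rule DERIV_divide[OF has_field_derivative_finv[OF z] DERIV_ident z_nonzero])
  then have "((\<lambda>v. (1 + v) * (finv v / v)) has_field_derivative
      (1 + z) * ((inverse ?p * z - finv z * 1) / (z * z)) + (0 + 1) * (finv z / z)) (at z)"
    by (rule DERIV_mult'[OF DERIV_add[OF DERIV_const DERIV_ident]])
  then have "((\<lambda>v. ((1 + v) * (finv v / v))^2) has_field_derivative
      of_nat 2 * (((1 + z) * ((inverse ?p * z - finv z * 1) / (z * z)) + (0 + 1) * (finv z / z))
        * ((1 + z) * (finv z / z))^(2 - Suc 0))) (at z)"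
    by (rule DERIV_power)
  also have "of_nat 2 * (((1 + z) * ((inverse ?p * z - finv z * 1) / (z * z)) + (0 + 1) * (finv z / z))
        * ((1 + z) * (finv z / z))^(2 - Suc 0))
      = 2 * ((1 + z) * (finv z / z)) * (- finv z / z^2 + (1 + z) / (z * ?p))"
    using z_nonzero \<open>?p \<noteq> 0\<close> by (simp add: field_simps power2_eq_square)
  finally show "((\<lambda>v. (strans v)^2) has_field_derivative
      2 * ((1 + z) * (finv z / z)) * (- finv z / z^2 + (1 + z) / (z * ?p))) (at z)"
    by (rule has_field_derivative_transform_within_open[where S="ball 0 \<epsilon> - {0}"])
       (use z z_nonzero in \<open>auto simp: strans_def\<close>)
qed

end

locale jacobi_moments =
  fixes lam th :: real and m :: "nat \<Rightarrow> real \<Rightarrow> real"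
  assumes m0: "\<forall>t\<ge>0. m 0 t = 1"
    and m_bound: "\<forall>n. \<forall>t\<ge>0. \<bar>m n t\<bar> \<le> 1"
    and pde: "\<forall>t\<ge>0. \<forall>z\<in>ball 0 1.
               ((\<lambda>s. mgf m s z) has_vector_derivative jacobi_mgf_rhs lam th (mgf m t) z)
                 (at t within {0..})"
begin

abbreviation rhs :: "real \<Rightarrow> complex \<Rightarrow> complex" where
  "rhs t \<equiv> jacobi_mgf_rhs lam th (mgf m t)"

abbreviation psi :: "real \<Rightarrow> complex \<Rightarrow> complex" where
  "psi t \<equiv> \<lambda>w. mgf m t w - 1"

definition lin_coeff :: "complex \<Rightarrow> complex" where
  "lin_coeff w = of_real (1 - 2*lam*th) - of_real (th*(1-lam)) * w"

definition quad_coeff :: "complex \<Rightarrow> complex" where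
  "quad_coeff w = of_real (lam*th) * (1 - w)"

definition flux :: "real \<Rightarrow> complex \<Rightarrow> complex" where
  "flux t = (\<lambda>w. lin_coeff w * mgf m t w + quad_coeff w * (mgf m t w)^2)"

definition flux_deriv :: "real \<Rightarrow> complex \<Rightarrow> complex" where
  "flux_deriv t w = - of_real (th*(1-lam)) * mgf m t w + lin_coeff w * deriv (mgf m t) w
     - of_real (lam*th) * (mgf m t w)^2 + quad_coeff w * (2 * mgf m t w * deriv (mgf m t) w)"

definition coeff_bound :: real where
  "coeff_bound = \<bar>1 - 2*lam*th\<bar> + \<bar>th*(1-lam)\<bar> + 2 * \<bar>lam*th\<bar>"

lemma rhs_eq: "rhs t w = - w * deriv (flux t) w"
  unfolding jacobi_mgf_rhs_def flux_def lin_coeff_def quad_coeff_def ..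

lemma has_vector_derivative_mgf:
  "t \<ge> 0 \<Longrightarrow> norm z < 1 \<Longrightarrow> ((\<lambda>s. mgf m s z) has_vector_derivative rhs t z) (at t within {0..})"
  using pde by simp

lemma mgf_eq_powser: "mgf m t = (\<lambda>z. \<Sum>n. complex_of_real (m n t) * z^n)"
  unfolding mgf_def by (rule ext) simp

lemma norm_moment_le: "t \<ge> 0 \<Longrightarrow> norm (complex_of_real (m n t)) \<le> 1"
  using m_bound by simp

lemma holomorphic_mgf: "t \<ge> 0 \<Longrightarrow> mgf m t holomorphic_on ball 0 1"
  unfolding mgf_eq_powser by (rule holomorphic_powser_coeffs_le_1) (rule norm_moment_le)

lemma has_field_derivative_mgf:
  "t \<ge> 0 \<Longrightarrow> norm w < 1 \<Longrightarrow> (mgf m t has_field_derivative deriv (mgf m t) w) (at w)"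
  using holomorphic_mgf holomorphic_derivI[of "mgf m t" "ball 0 1" w] by simp

lemma mgf_at_0: "t \<ge> 0 \<Longrightarrow> mgf m t 0 = 1"
  unfolding mgf_eq_powser using m0 by (simp add: powser_zero)

lemma deriv_mgf_at_0: "t \<ge> 0 \<Longrightarrow> deriv (mgf m t) 0 = of_real (m 1 t)"
  unfolding mgf_eq_powser by (rule deriv_powser_coeffs_le_1_at_0) (rule norm_moment_le)

lemma norm_mgf_le:
  assumes "t \<ge> 0" "r < 1" "norm w \<le> r"
  shows "norm (mgf m t w) \<le> 1 / (1 - r)"
proof -
  have "norm (mgf m t w) \<le> 1 / (1 - norm w)"
    unfolding mgf_eq_powser using assms norm_moment_le by (intro norm_powser_coeffs_le_1) auto
  also have "\<dots> \<le> 1 / (1 - r)" using assms by (intro divide_left_mono) auto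
  finally show ?thesis .
qed

lemma holomorphic_flux: "t \<ge> 0 \<Longrightarrow> flux t holomorphic_on ball 0 1"
  unfolding flux_def lin_coeff_def quad_coeff_def by (intro holomorphic_intros holomorphic_mgf)

lemma holomorphic_rhs: "t \<ge> 0 \<Longrightarrow> rhs t holomorphic_on ball 0 1"
  unfolding rhs_eq[abs_def] by (intro holomorphic_intros holomorphic_deriv holomorphic_flux) auto

lemma has_field_derivative_flux:
  "t \<ge> 0 \<Longrightarrow> norm w < 1 \<Longrightarrow> (flux t has_field_derivative flux_deriv t w) (at w)"
  unfolding flux_def flux_deriv_def lin_coeff_def quad_coeff_def
  by (rule derivative_eq_intros has_field_derivative_mgf refl | assumption)+
     (simp add: algebra_simps power2_eq_square)

lemma coeff_bound_nonneg: "coeff_bound \<ge> 0"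
  unfolding coeff_bound_def by simp

lemma norm_flux_factor_le:
  assumes "norm w < 1" "norm X \<le> B"
  shows "norm (lin_coeff w + quad_coeff w * X) \<le> coeff_bound * (1 + B)"
proof -
  have "norm (lin_coeff w) \<le> \<bar>1 - 2*lam*th\<bar> + \<bar>th*(1-lam)\<bar> * norm w"
    unfolding lin_coeff_def using norm_triangle_ineq4 by (metis norm_mult norm_of_real)
  also have "\<dots> \<le> \<bar>1 - 2*lam*th\<bar> + \<bar>th*(1-lam)\<bar>"
    using assms mult_left_le[of "norm w" "\<bar>th*(1-lam)\<bar>"] by simp
  finally have lin: "norm (lin_coeff w) \<le> \<bar>1 - 2*lam*th\<bar> + \<bar>th*(1-lam)\<bar>" .
  have "norm (1 - w) \<le> 2" using norm_triangle_ineq4[of 1 w] assms by simp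
  then have quad: "norm (quad_coeff w) \<le> 2 * \<bar>lam*th\<bar>"
    unfolding quad_coeff_def norm_mult norm_of_real
    using mult_left_mono[of "norm (1 - w)" 2 "\<bar>lam*th\<bar>"] by (simp add: mult.commute)
  have "0 \<le> B" using assms(2) norm_ge_zero order_trans by blast
  have "norm (lin_coeff w + quad_coeff w * X) \<le> norm (lin_coeff w) + norm (quad_coeff w) * norm X"
    by (metis norm_mult norm_triangle_ineq)
  also have "\<dots> \<le> (\<bar>1 - 2*lam*th\<bar> + \<bar>th*(1-lam)\<bar>) + 2 * \<bar>lam*th\<bar> * B"
    using lin quad assms(2) by (intro add_mono mult_mono) auto
  also have "\<dots> \<le> coeff_bound + coeff_bound * B"
    using \<open>0 \<le> B\<close> by (intro add_mono mult_right_mono) (auto simp: coeff_bound_def)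
  finally show ?thesis by (simp add: algebra_simps)
qed

lemma flux_diff:
  "flux u w - flux t w = (mgf m u w - mgf m t w) * (lin_coeff w + quad_coeff w * (mgf m u w + mgf m t w))"
  unfolding flux_def by (simp add: algebra_simps power2_eq_square)

lemma rhs_bounded:
  assumes "0 \<le> r" "r < 1"
  shows "\<exists>K\<ge>0. \<forall>t\<ge>0. \<forall>w. norm w \<le> r \<longrightarrow> norm (rhs t w) \<le> K"
proof -
  define r' where "r' = (1 + r) / 2"
  have r': "r < r'" "r' < 1" using assms by (auto simp: r'_def)
  define q where "q = 1 / (1 - r')"
  define C where "C = q * (coeff_bound * (1 + q))"
  have "q \<ge> 0" using r' by (simp add: q_def)
  then have C_nonneg: "C \<ge> 0" by (simp add: C_def coeff_bound_nonneg)
  have flux_le: "norm (flux t v) \<le> C" if t: "t \<ge> 0" and v: "norm v \<le> r'" for t v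
  proof -
    have Mq: "norm (mgf m t v) \<le> q" unfolding q_def using norm_mgf_le t r' v by auto
    have "flux t v = mgf m t v * (lin_coeff v + quad_coeff v * mgf m t v)"
      unfolding flux_def by (simp add: algebra_simps power2_eq_square)
    then have "norm (flux t v) = norm (mgf m t v) * norm (lin_coeff v + quad_coeff v * mgf m t v)"
      by (simp add: norm_mult)
    also have "\<dots> \<le> q * (coeff_bound * (1 + q))"
      using Mq norm_flux_factor_le[of v "mgf m t v" q] v r' \<open>q \<ge> 0\<close>
      by (intro mult_mono) (auto simp: coeff_bound_nonneg)
    finally show ?thesis unfolding C_def .
  qed
  have "norm (rhs t w) \<le> C / (r' - r)" if t: "t \<ge> 0" and w: "norm w \<le> r" for t w
  proof -
    have "norm (deriv (flux t) w) \<le> C / (r' - r)"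
      using flux_le t assms r' w by (intro Cauchy_first_deriv_bound_disc[OF holomorphic_flux]) auto
    moreover have "norm (rhs t w) = norm w * norm (deriv (flux t) w)" by (simp add: rhs_eq norm_mult)
    moreover have "\<dots> \<le> norm (deriv (flux t) w)" using w assms by (intro mult_left_le_one_le) auto
    ultimately show ?thesis by linarith
  qed
  moreover have "C / (r' - r) \<ge> 0" using C_nonneg r' by simp
  ultimately show ?thesis by blast
qed

lemma mgf_lipschitz_in_time:
  assumes "0 \<le> r" "r < 1"
  shows "\<exists>K\<ge>0. \<forall>t\<ge>0. \<forall>s\<ge>0. \<forall>w. norm w \<le> r \<longrightarrow> norm (mgf m s w - mgf m t w) \<le> K * \<bar>s - t\<bar>"
proof -
  obtain K where "K \<ge> 0" and K: "\<And>t w. t \<ge> 0 \<Longrightarrow> norm w \<le> r \<Longrightarrow> norm (rhs t w) \<le> K"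
    using rhs_bounded[OF assms] by blast
  have "norm (mgf m s w - mgf m t w) \<le> K * \<bar>s - t\<bar>" if "t \<ge> 0" "s \<ge> 0" "norm w \<le> r" for s t w
  proof (rule vector_differentiable_bound[where S="{min s t..max s t}" and f'="\<lambda>u. rhs u w"])
    fix u assume "u \<in> {min s t..max s t}"
    with that assms show "((\<lambda>u. mgf m u w) has_vector_derivative rhs u w) (at u within {min s t..max s t})"
      by (intro has_vector_derivative_within_subset[OF has_vector_derivative_mgf]) auto
    show "norm (rhs u w) \<le> K" using K[of u w] \<open>u \<in> {min s t..max s t}\<close> that by auto
  qed auto
  with \<open>K \<ge> 0\<close> show ?thesis by blast
qed

lemma rhs_lipschitz_in_time:
  assumes "0 \<le> r" "r < 1"
  shows "\<exists>L\<ge>0. \<forall>u\<ge>0. \<forall>t\<ge>0. \<forall>w. norm w \<le> r \<longrightarrow> norm (rhs u w - rhs t w) \<le> L * \<bar>u - t\<bar>"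
proof -
  define r' where "r' = (1 + r) / 2"
  have r': "r < r'" "r' < 1" "0 \<le> r'" using assms by (auto simp: r'_def)
  obtain K where "K \<ge> 0" and K: "\<And>t s w. t \<ge> 0 \<Longrightarrow> s \<ge> 0 \<Longrightarrow> norm w \<le> r' \<Longrightarrow>
      norm (mgf m s w - mgf m t w) \<le> K * \<bar>s - t\<bar>"
    using mgf_lipschitz_in_time[OF r'(3,2)] by blast
  define q where "q = 1 / (1 - r')"
  define L where "L = K * (coeff_bound * (1 + 2 * q)) / (r' - r)"
  have "norm (rhs u w - rhs t w) \<le> L * \<bar>u - t\<bar>" if u: "u \<ge> 0" and t: "t \<ge> 0" and w: "norm w \<le> r" for u t w
  proof -
    define H where "H = (\<lambda>w. flux u w - flux t w)"
    have H_bound: "norm (H v) \<le> K * \<bar>u - t\<bar> * (coeff_bound * (1 + 2 * q))" if v: "norm v \<le> r'" for v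
    proof -
      have "norm (mgf m u v) \<le> q" "norm (mgf m t v) \<le> q"
        using norm_mgf_le u t v r' unfolding q_def by auto
      then have "norm (mgf m u v + mgf m t v) \<le> 2 * q"
        using norm_triangle_ineq[of "mgf m u v" "mgf m t v"] by linarith
      then have "norm (lin_coeff v + quad_coeff v * (mgf m u v + mgf m t v)) \<le> coeff_bound * (1 + 2 * q)"
        using v r' by (intro norm_flux_factor_le) auto
      then show ?thesis
        unfolding H_def flux_diff norm_mult using K[OF t u v] \<open>K \<ge> 0\<close>
        by (intro mult_mono) auto
    qed
    have "H holomorphic_on ball 0 1" unfolding H_def by (intro holomorphic_intros holomorphic_flux u t)
    have dH: "deriv H w = deriv (flux u) w - deriv (flux t) w"
      unfolding H_def using w assms
      by (intro deriv_diff holomorphic_on_imp_differentiable_at[OF holomorphic_flux]) (auto simp: u t)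
    have "rhs u w - rhs t w = - (w * deriv H w)"
      unfolding rhs_eq dH by (simp add: algebra_simps)
    then have "norm (rhs u w - rhs t w) = norm w * norm (deriv H w)"
      by (simp add: norm_mult)
    also have "\<dots> \<le> norm (deriv H w)"
      using w assms by (intro mult_left_le_one_le) auto
    also have "\<dots> \<le> K * \<bar>u - t\<bar> * (coeff_bound * (1 + 2 * q)) / (r' - r)"
      using \<open>H holomorphic_on ball 0 1\<close> H_bound assms r' w
      by (intro Cauchy_first_deriv_bound_disc) auto
    finally show ?thesis by (simp add: L_def mult_ac)
  qed
  moreover have "L \<ge> 0" using \<open>K \<ge> 0\<close> r' coeff_bound_nonneg by (simp add: L_def q_def)
  ultimately show ?thesis by blast
qed

lemma mgf_taylor_in_time:
  assumes "0 \<le> r" "r < 1"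
  shows "\<exists>L. \<forall>t\<ge>0. \<forall>s\<ge>0. \<forall>w. norm w \<le> r \<longrightarrow>
     norm (mgf m s w - mgf m t w - of_real (s - t) * rhs t w) \<le> L * (s - t)^2"
proof -
  obtain L where "L \<ge> 0" and L: "\<And>u t w. u \<ge> 0 \<Longrightarrow> t \<ge> 0 \<Longrightarrow> norm w \<le> r \<Longrightarrow>
      norm (rhs u w - rhs t w) \<le> L * \<bar>u - t\<bar>"
    using rhs_lipschitz_in_time[OF assms] by blast
  have "norm (mgf m s w - mgf m t w - of_real (s - t) * rhs t w) \<le> L * (s - t)^2"
    if t: "t \<ge> 0" and s: "s \<ge> 0" and w: "norm w \<le> r" for s t w
  proof -
    let ?S = "{min s t..max s t}"
    have "norm (mgf m s w - mgf m t w - (s - t) *\<^sub>R rhs t w) \<le> norm (s - t) * (L * \<bar>s - t\<bar>)"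
    proof (rule vector_differentiable_bound_linearization[where S="?S"])
      fix u assume u: "u \<in> ?S"
      show "((\<lambda>u. mgf m u w) has_vector_derivative rhs u w) (at u within ?S)"
        using u t s w assms by (intro has_vector_derivative_within_subset[OF has_vector_derivative_mgf]) auto
      have "norm (rhs u w - rhs t w) \<le> L * \<bar>u - t\<bar>" using L[of u t w] u t s w by auto
      also have "\<dots> \<le> L * \<bar>s - t\<bar>" using u \<open>L \<ge> 0\<close> by (intro mult_left_mono) auto
      finally show "norm (rhs u w - rhs t w) \<le> L * \<bar>s - t\<bar>" .
    qed (auto simp: closed_segment_eq_real_ivl)
    then show ?thesis by (simp add: scaleR_conv_of_real power2_eq_square abs_mult_self_eq mult_ac)
  qed
  then show ?thesis by blast
qed

lemma deriv_rhs_at_0: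
  assumes t: "t \<ge> 0"
  shows "deriv (rhs t) 0 = of_real (th - m 1 t)"
proof -
  have rhs_fun: "rhs t = (\<lambda>w. - w * deriv (flux t) w)" by (rule ext) (rule rhs_eq)
  have "(deriv (flux t) has_field_derivative deriv (deriv (flux t)) 0) (at 0)"
    using holomorphic_deriv[OF holomorphic_flux[OF t]] by (intro holomorphic_derivI[of _ "ball 0 1"]) auto
  then have "(rhs t has_field_derivative (- 1) * deriv (flux t) 0 + deriv (deriv (flux t)) 0 * (- 0)) (at 0)"
    unfolding rhs_fun by (rule DERIV_mult[OF DERIV_minus[OF DERIV_ident]])
  then have "deriv (rhs t) 0 = - deriv (flux t) 0" by (simp add: DERIV_imp_deriv)
  also have "deriv (flux t) 0 = flux_deriv t 0"
    using has_field_derivative_flux[OF t] by (intro DERIV_imp_deriv) simp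
  also have "flux_deriv t 0 = of_real (m 1 t - th)"
    unfolding flux_deriv_def lin_coeff_def quad_coeff_def mgf_at_0[OF t] deriv_mgf_at_0[OF t]
    by (simp add: algebra_simps)
  finally show ?thesis by simp
qed

text \<open>Extracting the linear Taylor coefficient (a Cauchy estimate at \<open>0\<close>) from the second-order
  expansion of \<open>mgf m s\<close> in time gives the equation \<open>m 1' = th - m 1\<close>.\<close>

lemma has_vector_derivative_first_moment:
  assumes t: "t \<ge> 0"
  shows "((\<lambda>s. complex_of_real (m 1 s)) has_vector_derivative of_real (th - m 1 t)) (at t within {0..})"
proof -
  obtain L where L: "\<And>t s w. t \<ge> 0 \<Longrightarrow> s \<ge> 0 \<Longrightarrow> norm w \<le> 1/2 \<Longrightarrow>
     norm (mgf m s w - mgf m t w - of_real (s - t) * rhs t w) \<le> L * (s - t)^2"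
    using mgf_taylor_in_time[of "1/2"] by auto
  have "norm (complex_of_real (m 1 s) - of_real (m 1 t) - (s - t) *\<^sub>R of_real (th - m 1 t))
       \<le> \<bar>s - t\<bar> * (2 * L * \<bar>s - t\<bar>)" if s: "s \<ge> 0" for s
  proof -
    define H where "H = (\<lambda>w. mgf m s w - mgf m t w - of_real (s - t) * rhs t w)"
    have "(H has_field_derivative
        deriv (mgf m s) 0 - deriv (mgf m t) 0 - of_real (s - t) * deriv (rhs t) 0) (at 0)"
      unfolding H_def using holomorphic_rhs[OF t]
      by (intro derivative_intros has_field_derivative_mgf DERIV_cmult holomorphic_derivI[of _ "ball 0 1"])
         (auto simp: s t)
    then have "deriv H 0 = of_real (m 1 s) - of_real (m 1 t) - of_real (s - t) * of_real (th - m 1 t)"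
      by (simp add: DERIV_imp_deriv deriv_mgf_at_0 deriv_rhs_at_0 s t)
    moreover have "norm (deriv H 0) \<le> L * (s - t)^2 / (1/2 - 0)"
      unfolding H_def using L[OF t s]
      by (intro Cauchy_first_deriv_bound_disc[where R=1] holomorphic_intros holomorphic_mgf holomorphic_rhs s t) auto
    ultimately show ?thesis
      by (simp add: scaleR_conv_of_real power2_eq_square abs_mult_self_eq mult_ac)
  qed
  then have "\<forall>\<^sub>F s in at t within {0..}. norm (complex_of_real (m 1 s) - complex_of_real (m 1 t)
      - (s - t) *\<^sub>R of_real (th - m 1 t)) \<le> \<bar>s - t\<bar> * (2 * L * \<bar>s - t\<bar>)"
    unfolding eventually_at_filter by (intro always_eventually) auto
  moreover have "((\<lambda>s. 2 * L * \<bar>s - t\<bar>) \<longlongrightarrow> 0) (at t within {0..})"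
    by (rule tendsto_eq_intros refl)+ simp
  ultimately show ?thesis by (rule has_vector_derivative_remainder_bound)
qed

lemma deriv_psi: "t \<ge> 0 \<Longrightarrow> norm w < 1 \<Longrightarrow> deriv (psi t) w = deriv (mgf m t) w"
  using DERIV_diff[OF has_field_derivative_mgf DERIV_const, of t w 1] by (simp add: DERIV_imp_deriv)

lemma deriv_mgf_near_0:
  assumes t: "t \<ge> 0" and w: "norm w \<le> 1/4"
  shows "norm (deriv (mgf m t) w - of_real (m 1 t)) \<le> 64 * norm w"
proof -
  have "norm (deriv (deriv (mgf m t)) v) \<le> 64" if "v \<in> cball 0 (1/4)" for v
  proof -
    have "norm ((deriv ^^ 2) (mgf m t) v) \<le> fact 2 * 2 / (1/2 - 1/4)^2"
      by (rule Cauchy_deriv_bound_disc[OF holomorphic_mgf[OF t], where r'="1/2"])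
         (use that norm_mgf_le[OF t, of "1/2"] in auto)
    then show ?thesis by (simp add: numeral_2_eq_2 power2_eq_square)
  qed
  moreover have "(deriv (mgf m t) has_field_derivative deriv (deriv (mgf m t)) v) (at v within cball 0 (1/4))"
    if "v \<in> cball 0 (1/4)" for v
    using that holomorphic_deriv[OF holomorphic_mgf[OF t]]
    by (intro has_field_derivative_at_within[OF holomorphic_derivI[of _ "ball 0 1"]]) auto
  ultimately have "norm (deriv (mgf m t) w - deriv (mgf m t) 0) \<le> 64 * norm (w - 0)"
    using w by (intro field_differentiable_bound[where S="cball 0 (1/4)"]) auto
  then show ?thesis by (simp add: deriv_mgf_at_0[OF t])
qed

lemma local_inverse_psi:
  assumes t: "t \<ge> 0" and rho: "0 < \<rho>" "\<rho> \<le> 1/4" "64 * \<rho> \<le> \<bar>m 1 t\<bar> / 2"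
    and eps: "0 < \<epsilon>" "\<epsilon> \<le> \<rho> * \<bar>m 1 t\<bar> / 4" "\<epsilon> < 1"
  shows "local_inverse (psi t) (of_real (m 1 t)) \<rho> \<epsilon>"
proof
  show "psi t holomorphic_on ball 0 1" by (intro holomorphic_intros holomorphic_mgf t)
  show "deriv (psi t) 0 = of_real (m 1 t)" by (simp add: deriv_psi t deriv_mgf_at_0)
  fix w :: complex assume w: "w \<in> cball 0 \<rho>"
  then have "norm (deriv (psi t) w - of_real (m 1 t)) \<le> 64 * norm w"
    using deriv_mgf_near_0[OF t] deriv_psi[OF t] rho by auto
  also have "\<dots> \<le> 64 * \<rho>" using w by simp
  finally show "norm (deriv (psi t) w - of_real (m 1 t)) \<le> norm (complex_of_real (m 1 t)) / 2"
    using rho by simp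
qed (use rho eps t mgf_at_0 in auto)

definition eta :: "real \<Rightarrow> real \<Rightarrow> complex \<Rightarrow> complex" where
  "eta \<rho> t = local_inverse.finv (psi t) \<rho>"

definition S_transform :: "real \<Rightarrow> real \<Rightarrow> complex \<Rightarrow> complex" where
  "S_transform \<rho> t = local_inverse.strans (psi t) (of_real (m 1 t)) \<rho>"

definition S_rhs :: "(complex \<Rightarrow> complex) \<Rightarrow> complex \<Rightarrow> complex" where
  "S_rhs S z = (2 * of_real (lam*th) * z + 1) * S z - of_real th * (1 + 2 * of_real lam * z) * (S z)^2
     - of_real th * z * (1 + of_real lam * z) / 2 * deriv (\<lambda>w. (S w)^2) z"

end

locale jacobi_window = jacobi_moments +
  fixes t d \<delta> \<rho> \<epsilon> :: real
  assumes t_nonneg: "t \<ge> 0" and d_pos: "d > 0" and delta_pos: "\<delta> > 0" and rho_le: "\<rho> \<le> 1/4"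
    and uniform_inverse: "\<And>s. s \<ge> 0 \<Longrightarrow> \<bar>s - t\<bar> < d \<Longrightarrow>
      local_inverse (psi s) (of_real (m 1 s)) \<rho> \<epsilon> \<and> \<delta> \<le> \<bar>m 1 s\<bar>"
begin

sublocale local_inverse "psi t" "of_real (m 1 t)" \<rho> \<epsilon>
  using uniform_inverse[of t] t_nonneg d_pos by simp

lemma eventually_in_window: "eventually (\<lambda>s. s \<ge> 0 \<and> \<bar>s - t\<bar> < d) (at t within {0..})"
  unfolding eventually_at using d_pos by (intro exI[of _ d]) (auto simp: dist_real_def)

lemma eta_at_t: "eta \<rho> t = finv"
  unfolding eta_def ..

lemma eta_in_window:
  assumes "s \<ge> 0" "\<bar>s - t\<bar> < d" "z \<in> ball 0 \<epsilon>"
  shows "eta \<rho> s z \<in> ball 0 \<rho>" "mgf m s (eta \<rho> s z) = 1 + z"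
  using local_inverse.finv_in_ball[OF conjunct1[OF uniform_inverse[OF assms(1,2)]] assms(3)]
    local_inverse.f_finv[OF conjunct1[OF uniform_inverse[OF assms(1,2)]] assms(3)]
  by (auto simp: eta_def algebra_simps)

lemma eta_lipschitz_in_time:
  assumes z: "z \<in> ball 0 \<epsilon>"
  obtains K where "\<And>s. s \<ge> 0 \<Longrightarrow> \<bar>s - t\<bar> < d \<Longrightarrow> norm (eta \<rho> s z - eta \<rho> t z) \<le> K * \<bar>s - t\<bar>"
proof -
  obtain K where K: "\<And>t s w. t \<ge> 0 \<Longrightarrow> s \<ge> 0 \<Longrightarrow> norm w \<le> 1/4 \<Longrightarrow>
      norm (mgf m s w - mgf m t w) \<le> K * \<bar>s - t\<bar>"
    using mgf_lipschitz_in_time[of "1/4"] by auto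
  have "norm (eta \<rho> s z - eta \<rho> t z) \<le> (2 * K / \<delta>) * \<bar>s - t\<bar>" if s: "s \<ge> 0" "\<bar>s - t\<bar> < d" for s
  proof -
    have at_s: "eta \<rho> s z \<in> ball 0 \<rho>" "mgf m s (eta \<rho> s z) = 1 + z"
      using eta_in_window[OF s z] by auto
    have at_t: "eta \<rho> t z \<in> ball 0 \<rho>" "mgf m t (eta \<rho> t z) = 1 + z"
      using eta_in_window[OF t_nonneg _ z] d_pos by auto
    have "\<bar>m 1 t\<bar> / 2 * norm (eta \<rho> s z - eta \<rho> t z)
        \<le> norm (psi t (eta \<rho> s z) - psi t (eta \<rho> t z))"
      using f_expansive[of "eta \<rho> s z" "eta \<rho> t z"] at_s at_t by auto
    also have "psi t (eta \<rho> s z) - psi t (eta \<rho> t z) = mgf m t (eta \<rho> s z) - mgf m s (eta \<rho> s z)"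
      using at_s at_t by simp
    also have "norm \<dots> \<le> K * \<bar>s - t\<bar>"
      using K[OF s(1) t_nonneg, of "eta \<rho> s z"] at_s rho_le by (simp add: abs_minus_commute)
    finally have "\<bar>m 1 t\<bar> / 2 * norm (eta \<rho> s z - eta \<rho> t z) \<le> K * \<bar>s - t\<bar>" .
    moreover have "\<delta> / 2 * norm (eta \<rho> s z - eta \<rho> t z) \<le> \<bar>m 1 t\<bar> / 2 * norm (eta \<rho> s z - eta \<rho> t z)"
      using uniform_inverse[of t] t_nonneg d_pos by (intro mult_right_mono) auto
    ultimately show ?thesis using delta_pos by (simp add: field_simps)
  qed
  then show ?thesis using that by blast
qed

lemma eta_continuous_in_time:
  assumes z: "z \<in> ball 0 \<epsilon>"
  shows "((\<lambda>s. eta \<rho> s z) \<longlongrightarrow> finv z) (at t within {0..})"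
proof -
  obtain K where K: "\<And>s. s \<ge> 0 \<Longrightarrow> \<bar>s - t\<bar> < d \<Longrightarrow> norm (eta \<rho> s z - eta \<rho> t z) \<le> K * \<bar>s - t\<bar>"
    using eta_lipschitz_in_time[OF z] by blast
  have "((\<lambda>s. eta \<rho> s z - eta \<rho> t z) \<longlongrightarrow> 0) (at t within {0..})"
  proof (rule Lim_null_comparison)
    show "eventually (\<lambda>s. norm (eta \<rho> s z - eta \<rho> t z) \<le> K * \<bar>s - t\<bar>) (at t within {0..})"
      using eventually_in_window by eventually_elim (use K in auto)
    show "((\<lambda>s. K * \<bar>s - t\<bar>) \<longlongrightarrow> 0) (at t within {0..})"
      by (rule tendsto_eq_intros refl)+ simp
  qed
  then show ?thesis by (simp add: LIM_zero_iff eta_at_t)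
qed

text \<open>Along \<open>s \<mapsto> eta \<rho> s z\<close> the value of \<open>psi s\<close> is frozen at \<open>z\<close>, so the time-\<open>t\<close> function
  \<open>psi t\<close> changes there at the rate \<open>-rhs t\<close>; inverting \<open>psi t\<close> gives the rate of \<open>eta\<close>.\<close>

lemma has_vector_derivative_psi_along_eta:
  assumes z: "z \<in> ball 0 \<epsilon>"
  shows "((\<lambda>s. psi t (eta \<rho> s z)) has_vector_derivative - rhs t (finv z)) (at t within {0..})"
proof -
  obtain L where L: "\<And>t s w. t \<ge> 0 \<Longrightarrow> s \<ge> 0 \<Longrightarrow> norm w \<le> 1/4 \<Longrightarrow>
      norm (mgf m s w - mgf m t w - of_real (s - t) * rhs t w) \<le> L * (s - t)^2"
    using mgf_taylor_in_time[of "1/4"] by auto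
  let ?\<phi> = "\<lambda>s. L * \<bar>s - t\<bar> + norm (rhs t (eta \<rho> s z) - rhs t (finv z))"
  have remainder: "eventually (\<lambda>s. norm (psi t (eta \<rho> s z) - psi t (eta \<rho> t z) - (s - t) *\<^sub>R - rhs t (finv z))
      \<le> \<bar>s - t\<bar> * ?\<phi> s) (at t within {0..})"
    using eventually_in_window
  proof eventually_elim
    case (elim s)
    then have s: "s \<ge> 0" "\<bar>s - t\<bar> < d" by auto
    let ?w = "eta \<rho> s z"
    have small: "norm ?w \<le> 1/4" using eta_in_window(1)[OF s z] rho_le by auto
    have "psi t ?w - psi t (eta \<rho> t z) - (s - t) *\<^sub>R - rhs t (finv z)
      = - (mgf m s ?w - mgf m t ?w - of_real (s - t) * rhs t ?w)
        - of_real (s - t) * (rhs t ?w - rhs t (finv z))"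
      using eta_in_window(2)[OF s z] eta_in_window(2)[OF t_nonneg _ z] d_pos
      by (simp add: scaleR_conv_of_real algebra_simps)
    then have "norm (psi t ?w - psi t (eta \<rho> t z) - (s - t) *\<^sub>R - rhs t (finv z))
        \<le> norm (mgf m s ?w - mgf m t ?w - of_real (s - t) * rhs t ?w)
          + \<bar>s - t\<bar> * norm (rhs t ?w - rhs t (finv z))"
      using norm_triangle_ineq4[of "- (mgf m s ?w - mgf m t ?w - of_real (s - t) * rhs t ?w)"
          "of_real (s - t) * (rhs t ?w - rhs t (finv z))"]
      by (simp only: norm_minus_cancel norm_mult norm_of_real)
    also have "\<dots> \<le> L * (s - t)^2 + \<bar>s - t\<bar> * norm (rhs t ?w - rhs t (finv z))"
      using L[OF t_nonneg s(1) small] by simp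
    also have "\<dots> = \<bar>s - t\<bar> * ?\<phi> s"
      by (simp add: algebra_simps power2_eq_square abs_mult_self_eq)
    finally show ?case .
  qed
  have "isCont (rhs t) (finv z)"
    using holomorphic_on_imp_continuous_on[OF holomorphic_rhs[OF t_nonneg]] finv_in_ball[OF z] rho
    by (simp add: continuous_on_eq_continuous_at)
  then have "((\<lambda>s. rhs t (eta \<rho> s z)) \<longlongrightarrow> rhs t (finv z)) (at t within {0..})"
    using eta_continuous_in_time[OF z] by (rule isCont_tendsto_compose)
  then have "((\<lambda>s. norm (rhs t (eta \<rho> s z) - rhs t (finv z))) \<longlongrightarrow> 0) (at t within {0..})"
    by (intro tendsto_norm_zero) (simp add: LIM_zero)
  moreover have "((\<lambda>s. L * \<bar>s - t\<bar>) \<longlongrightarrow> 0) (at t within {0..})"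
    by (rule tendsto_eq_intros refl)+ simp
  ultimately have "(?\<phi> \<longlongrightarrow> 0) (at t within {0..})"
    using tendsto_add by fastforce
  with remainder show ?thesis by (rule has_vector_derivative_remainder_bound)
qed

lemma has_vector_derivative_eta:
  assumes z: "z \<in> ball 0 \<epsilon>"
  shows "((\<lambda>s. eta \<rho> s z) has_vector_derivative - rhs t (finv z) / deriv (mgf m t) (finv z))
    (at t within {0..})"
proof -
  have "psi t (eta \<rho> t z) = z" using f_finv[OF z] by (simp add: eta_at_t)
  then have "(finv has_field_derivative inverse (deriv (psi t) (finv z)))
      (at (psi t (eta \<rho> t z)) within (\<lambda>s. psi t (eta \<rho> s z)) ` {0..})"
    using has_field_derivative_at_within[OF has_field_derivative_finv[OF z]] by simp
  with has_vector_derivative_psi_along_eta[OF z]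
  have "((finv \<circ> (\<lambda>s. psi t (eta \<rho> s z))) has_vector_derivative
      - rhs t (finv z) * inverse (deriv (psi t) (finv z))) (at t within {0..})"
    by (rule field_vector_diff_chain_within)
  then have "((\<lambda>s. eta \<rho> s z) has_vector_derivative
      - rhs t (finv z) * inverse (deriv (psi t) (finv z))) (at t within {0..})"
  proof (rule has_vector_derivative_transform_within[OF _ d_pos])
    show "(finv \<circ> (\<lambda>s. psi t (eta \<rho> s z))) s = eta \<rho> s z" if "s \<in> {0..}" "dist s t < d" for s
      using that eta_in_window(1)[of s z] z finv_f by (simp add: dist_real_def)
  qed (use t_nonneg in simp)
  moreover have "deriv (psi t) (finv z) = deriv (mgf m t) (finv z)"
    using finv_in_ball[OF z] rho t_nonneg by (intro deriv_psi) auto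
  ultimately show ?thesis by (simp add: divide_inverse)
qed

lemma S_transform_at_t: "S_transform \<rho> t = strans"
  unfolding S_transform_def ..

lemma S_transform_in_window:
  assumes "s \<ge> 0" "\<bar>s - t\<bar> < d"
  shows "S_transform \<rho> s z = (1 + z) * (if z = 0 then inverse (of_real (m 1 s)) else eta \<rho> s z / z)"
  unfolding S_transform_def eta_def
  using local_inverse.strans_def[OF conjunct1[OF uniform_inverse[OF assms]]] by simp

lemma has_vector_derivative_S_transform_at_0:
  "((\<lambda>s. S_transform \<rho> s 0) has_vector_derivative S_rhs strans 0) (at t within {0..})"
proof -
  have m1_nonzero: "m 1 t \<noteq> 0" using uniform_inverse[of t] t_nonneg d_pos delta_pos by auto
  then have "(inverse has_field_derivative - (inverse (complex_of_real (m 1 t)) ^ Suc (Suc 0)))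
      (at (complex_of_real (m 1 t)) within (\<lambda>s. complex_of_real (m 1 s)) ` {0..})"
    by (intro DERIV_inverse) simp
  with has_vector_derivative_first_moment[OF t_nonneg]
  have "((inverse \<circ> (\<lambda>s. complex_of_real (m 1 s))) has_vector_derivative
      of_real (th - m 1 t) * - (inverse (complex_of_real (m 1 t)) ^ Suc (Suc 0))) (at t within {0..})"
    by (rule field_vector_diff_chain_within)
  then have "((\<lambda>s. S_transform \<rho> s 0) has_vector_derivative
      of_real (th - m 1 t) * - (inverse (complex_of_real (m 1 t)) ^ Suc (Suc 0))) (at t within {0..})"
  proof (rule has_vector_derivative_transform_within[OF _ d_pos])
    show "(inverse \<circ> (\<lambda>s. complex_of_real (m 1 s))) s = S_transform \<rho> s 0"
      if "s \<in> {0..}" "dist s t < d" for s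
      using that S_transform_in_window[of s 0] by (simp add: dist_real_def)
  qed (use t_nonneg in simp)
  moreover have "of_real (th - m 1 t) * - (inverse (complex_of_real (m 1 t)) ^ Suc (Suc 0)) = S_rhs strans 0"
    unfolding S_rhs_def strans_def using m1_nonzero by (simp add: field_simps power2_eq_square)
  ultimately show ?thesis by simp
qed

lemma has_vector_derivative_S_transform_off_0:
  assumes z: "z \<in> ball 0 \<epsilon>" and z_nonzero: "z \<noteq> 0"
  shows "((\<lambda>s. S_transform \<rho> s z) has_vector_derivative S_rhs strans z) (at t within {0..})"
proof -
  define w where "w = finv z"
  define p where "p = deriv (mgf m t) w"
  have "((\<lambda>s. (1 + z) / z * eta \<rho> s z) has_vector_derivative (1 + z) / z * (- rhs t w / p))
      (at t within {0..})"
    unfolding w_def p_def by (rule has_vector_derivative_mult_right[OF has_vector_derivative_eta[OF z]])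
  then have deriv_S: "((\<lambda>s. S_transform \<rho> s z) has_vector_derivative (1 + z) / z * (- rhs t w / p))
      (at t within {0..})"
  proof (rule has_vector_derivative_transform_within[OF _ d_pos])
    show "(1 + z) / z * eta \<rho> s z = S_transform \<rho> s z" if "s \<in> {0..}" "dist s t < d" for s
      using that S_transform_in_window[of s z] z_nonzero by (simp add: dist_real_def)
  qed (use t_nonneg in simp)
  have w: "w \<in> ball 0 \<rho>" "mgf m t w = 1 + z"
    using eta_in_window[OF t_nonneg _ z] d_pos by (auto simp: w_def eta_at_t)
  then have "norm w < 1" using rho by auto
  have "p \<noteq> 0" using deriv_f_nonzero[of w] w deriv_psi[OF t_nonneg \<open>norm w < 1\<close>] by (auto simp: p_def)
  have rhs_w: "rhs t w = - w * flux_deriv t w"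
    using rhs_eq DERIV_imp_deriv[OF has_field_derivative_flux[OF t_nonneg \<open>norm w < 1\<close>]] by simp
  have S_z: "strans z = (1 + z) * (w / z)" unfolding strans_def w_def using z_nonzero by simp
  have dS_z: "deriv (\<lambda>v. (strans v)^2) z = 2 * ((1 + z) * (w / z)) * (- w / z^2 + (1 + z) / (z * p))"
    using deriv_strans_squared[OF z z_nonzero] deriv_psi[OF t_nonneg \<open>norm w < 1\<close>]
    by (simp add: w_def p_def)
  txt \<open>Here the evolution equation of \<open>mgf m\<close>, evaluated at \<open>w\<close> where \<open>mgf m t w = 1 + z\<close>,
    becomes the equation for the S transform.\<close>
  have "(1 + z) / z * (- rhs t w / p) = S_rhs strans z"
    unfolding S_rhs_def S_z dS_z rhs_w flux_deriv_def p_def[symmetric] w(2) lin_coeff_def quad_coeff_def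
    using z_nonzero \<open>p \<noteq> 0\<close> by (simp add: field_simps power2_eq_square)
  with deriv_S show ?thesis by simp
qed

lemma has_vector_derivative_S_transform:
  "z \<in> ball 0 \<epsilon> \<Longrightarrow>
    ((\<lambda>s. S_transform \<rho> s z) has_vector_derivative S_rhs (S_transform \<rho> t) z) (at t within {0..})"
  using has_vector_derivative_S_transform_at_0 has_vector_derivative_S_transform_off_0
  by (cases "z = 0") (auto simp: S_transform_at_t)

end

context jacobi_moments
begin

lemma S_rhs_cong:
  assumes "open U" "z \<in> U" "\<And>w. w \<in> U \<Longrightarrow> S w = S' w"
  shows "S_rhs S z = S_rhs S' z"
proof -
  have "eventually (\<lambda>w. w \<in> U) (nhds z)" using assms by (intro eventually_nhds_in_open)
  then have "eventually (\<lambda>w. (S w)^2 = (S' w)^2) (nhds z)" by eventually_elim (use assms in auto)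
  then have "deriv (\<lambda>w. (S w)^2) z = deriv (\<lambda>w. (S' w)^2) z" by (rule deriv_cong_ev) simp
  then show ?thesis using assms by (simp add: S_rhs_def)
qed

lemma is_S_transform_on_S_transform:
  assumes "\<And>s. s \<in> T \<Longrightarrow> local_inverse (psi s) (of_real (m 1 s)) \<rho> \<epsilon>"
  shows "is_S_transform_on (mgf m) T \<epsilon> (S_transform \<rho>)"
  unfolding is_S_transform_on_def S_transform_def
  using local_inverse.holomorphic_strans[OF assms] local_inverse.f_strans[OF assms] by auto

lemma is_S_transform_on_unique:
  assumes "\<And>s. s \<in> T \<Longrightarrow> local_inverse (psi s) (of_real (m 1 s)) \<rho> \<epsilon>"
    and "is_S_transform_on (mgf m) T \<epsilon> S" "s \<in> T" "z \<in> ball 0 \<epsilon>"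
  shows "S s z = S_transform \<rho> s z"
  unfolding S_transform_def using assms(2-)
  by (intro local_inverse.strans_unique[OF assms(1)[OF assms(3)]]) (auto simp: is_S_transform_on_def)

text \<open>Near \<open>0\<close>, \<open>deriv (mgf m s)\<close> stays within \<open>64 \<bar>w\<bar>\<close> of \<open>m 1 s\<close>, and \<open>\<bar>m 1 s\<bar> > \<delta>\<close> for \<open>s\<close>
  near \<open>t0\<close>; this makes the radii \<open>\<rho>\<close>, \<open>\<epsilon>\<close> of the local inverses uniform in time.\<close>

lemma uniform_local_inverse_near:
  assumes t0: "t0 \<ge> 0" and nonzero: "m 1 t0 \<noteq> 0"
  obtains \<delta> \<rho> \<epsilon> where "\<delta> > 0" "0 < \<rho>" "\<rho> \<le> 1/4" "\<epsilon> > 0"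
    "\<And>s. s \<ge> 0 \<Longrightarrow> \<bar>s - t0\<bar> < \<epsilon> \<Longrightarrow> local_inverse (psi s) (of_real (m 1 s)) \<rho> \<epsilon> \<and> \<delta> \<le> \<bar>m 1 s\<bar>"
proof -
  define \<delta> where "\<delta> = \<bar>m 1 t0\<bar> / 2"
  have \<delta>: "0 < \<delta>" "\<delta> \<le> 1/2" using nonzero m_bound t0 by (auto simp: \<delta>_def)
  have "continuous (at t0 within {0..}) (\<lambda>s. complex_of_real (m 1 s))"
    by (rule has_vector_derivative_continuous[OF has_vector_derivative_first_moment[OF t0]])
  then obtain \<epsilon>\<^sub>1 where "\<epsilon>\<^sub>1 > 0" and \<epsilon>\<^sub>1: "\<And>s. s \<in> {0..} \<Longrightarrow> dist s t0 < \<epsilon>\<^sub>1 \<Longrightarrow>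
      dist (complex_of_real (m 1 s)) (complex_of_real (m 1 t0)) < \<delta>"
    unfolding continuous_within_eps_delta using \<delta> by blast
  have m1_large: "\<delta> < \<bar>m 1 s\<bar>" if "s \<ge> 0" "\<bar>s - t0\<bar> < \<epsilon>\<^sub>1" for s
  proof -
    have "\<bar>m 1 s - m 1 t0\<bar> < \<delta>"
      using \<epsilon>\<^sub>1[of s] that by (simp add: dist_real_def dist_norm flip: of_real_diff)
    then show ?thesis unfolding \<delta>_def by linarith
  qed
  define \<rho> where "\<rho> = min (1/4) (\<delta> / 128)"
  define \<epsilon> where "\<epsilon> = min \<epsilon>\<^sub>1 (\<rho> * \<delta> / 4)"
  have \<rho>: "0 < \<rho>" "\<rho> \<le> 1/4" "64 * \<rho> \<le> \<delta> / 2" using \<delta> by (auto simp: \<rho>_def)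
  have \<epsilon>: "0 < \<epsilon>" "\<epsilon> \<le> \<epsilon>\<^sub>1" "\<epsilon> \<le> \<rho> * \<delta> / 4"
    using \<open>\<epsilon>\<^sub>1 > 0\<close> \<rho> \<delta> by (auto simp: \<epsilon>_def)
  have "\<rho> * \<delta> / 4 \<le> 1/4 * 1 / 4" using \<rho> \<delta> by (intro divide_right_mono mult_mono) auto
  then have "\<epsilon> < 1" using \<epsilon> by linarith
  show ?thesis
  proof (rule that[OF \<delta>(1) \<rho>(1,2) \<epsilon>(1)])
    fix s assume s: "s \<ge> 0" "\<bar>s - t0\<bar> < \<epsilon>"
    then have "\<delta> < \<bar>m 1 s\<bar>" using m1_large \<epsilon> by auto
    moreover have "\<rho> * \<delta> / 4 \<le> \<rho> * \<bar>m 1 s\<bar> / 4"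
      using \<open>\<delta> < \<bar>m 1 s\<bar>\<close> \<rho> by (intro divide_right_mono mult_left_mono) auto
    ultimately show "local_inverse (psi s) (of_real (m 1 s)) \<rho> \<epsilon> \<and> \<delta> \<le> \<bar>m 1 s\<bar>"
      using local_inverse_psi[OF s(1) \<rho>(1,2) _ \<epsilon>(1) _ \<open>\<epsilon> < 1\<close>] \<rho>(3) \<epsilon>(3) by auto
  qed
qed

lemma S_transform_evolution_near:
  assumes t0: "t0 \<ge> 0" and nonzero: "m 1 t0 \<noteq> 0"
  shows "\<exists>\<epsilon>>0. (\<exists>S. is_S_transform_on (mgf m) ({0..} \<inter> {t0-\<epsilon><..<t0+\<epsilon>}) \<epsilon> S) \<and>
    (\<forall>S. is_S_transform_on (mgf m) ({0..} \<inter> {t0-\<epsilon><..<t0+\<epsilon>}) \<epsilon> S \<longrightarrow>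
      (\<forall>t\<in>{0..} \<inter> {t0-\<epsilon><..<t0+\<epsilon>}. \<forall>z\<in>ball 0 \<epsilon>.
         ((\<lambda>s. S s z) has_vector_derivative S_rhs (S t) z) (at t within {0..})))"
proof -
  obtain \<delta> \<rho> \<epsilon> where \<delta>: "\<delta> > 0" and \<rho>: "0 < \<rho>" "\<rho> \<le> 1/4" and "\<epsilon> > 0"
    and uniform: "\<And>s. s \<ge> 0 \<Longrightarrow> \<bar>s - t0\<bar> < \<epsilon> \<Longrightarrow>
      local_inverse (psi s) (of_real (m 1 s)) \<rho> \<epsilon> \<and> \<delta> \<le> \<bar>m 1 s\<bar>"
    using uniform_local_inverse_near[OF t0 nonzero] by blast
  define T where "T = {0..} \<inter> {t0-\<epsilon><..<t0+\<epsilon>}"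
  have inverse_on_T: "local_inverse (psi s) (of_real (m 1 s)) \<rho> \<epsilon>" if "s \<in> T" for s
    using uniform[of s] that by (auto simp: T_def abs_less_iff)
  have "((\<lambda>s. S s z) has_vector_derivative S_rhs (S t) z) (at t within {0..})"
    if S: "is_S_transform_on (mgf m) T \<epsilon> S" and t: "t \<in> T" and z: "z \<in> ball 0 \<epsilon>" for S t z
  proof -
    define d where "d = \<epsilon> - \<bar>t - t0\<bar>"
    have near_t0: "\<bar>s - t0\<bar> < \<epsilon>" if "\<bar>s - t\<bar> < d" for s
      using that abs_triangle_ineq[of "s - t" "t - t0"] by (simp add: d_def)
    have in_T: "s \<in> T" if "s \<ge> 0" "\<bar>s - t\<bar> < d" for s
      using that(1) near_t0[OF that(2)] by (auto simp: T_def abs_less_iff)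
    interpret jacobi_window lam th m t d \<delta> \<rho> \<epsilon>
    proof (intro jacobi_window.intro jacobi_moments_axioms jacobi_window_axioms.intro)
      show "local_inverse (psi s) (of_real (m 1 s)) \<rho> \<epsilon> \<and> \<delta> \<le> \<bar>m 1 s\<bar>"
        if "s \<ge> 0" "\<bar>s - t\<bar> < d" for s
        using uniform[OF that(1) near_t0[OF that(2)]] .
    qed (use t \<delta> \<rho> in \<open>auto simp: T_def d_def abs_less_iff\<close>)
    have S_eq: "S s v = S_transform \<rho> s v" if "s \<ge> 0" "\<bar>s - t\<bar> < d" "v \<in> ball 0 \<epsilon>" for s v
      using that by (intro is_S_transform_on_unique[OF inverse_on_T S in_T])
    have "S_rhs (S t) z = S_rhs (S_transform \<rho> t) z"
      using z t_nonneg d_pos by (intro S_rhs_cong[of "ball 0 \<epsilon>"] S_eq) auto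
    moreover have "((\<lambda>s. S s z) has_vector_derivative S_rhs (S_transform \<rho> t) z) (at t within {0..})"
      using has_vector_derivative_S_transform[OF z]
    proof (rule has_vector_derivative_transform_within[OF _ d_pos])
      show "S_transform \<rho> s z = S s z" if "s \<in> {0..}" "dist s t < d" for s
        using S_eq[of s z] that z by (simp add: dist_real_def)
    qed (use t_nonneg in simp)
    ultimately show ?thesis by simp
  qed
  moreover have "is_S_transform_on (mgf m) T \<epsilon> (S_transform \<rho>)"
    by (rule is_S_transform_on_S_transform[OF inverse_on_T])
  ultimately show ?thesis unfolding T_def using \<open>\<epsilon> > 0\<close> by (intro exI[of _ \<epsilon>]) blast
qed

end

theorem mainTheorem1:
  fixes lam th :: real and m :: "nat \<Rightarrow> real \<Rightarrow> real"
  assumes lam_pos: "lam > 0"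
    and th_pos: "0 < th" and th_le: "th \<le> 1"
    and lamth_le: "lam * th \<le> 1"
    and m0: "\<forall>t\<ge>0. m 0 t = 1"
    and m_bound: "\<forall>n. \<forall>t\<ge>0. \<bar>m n t\<bar> \<le> 1"
    and m1_nz: "\<forall>t\<ge>0. m 1 t \<noteq> 0"
    and pde: "\<forall>t\<ge>0. \<forall>z\<in>ball 0 1.
               ((\<lambda>s. mgf m s z) has_vector_derivative jacobi_mgf_rhs lam th (mgf m t) z)
                 (at t within {0..})"
  shows "\<forall>t0\<ge>0. \<exists>\<epsilon>>0.
           (\<exists>S. is_S_transform_on (mgf m) ({0..} \<inter> {t0-\<epsilon><..<t0+\<epsilon>}) \<epsilon> S) \<and>
           (\<forall>S. is_S_transform_on (mgf m) ({0..} \<inter> {t0-\<epsilon><..<t0+\<epsilon>}) \<epsilon> S \<longrightarrow>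
              (\<forall>t\<in>{0..} \<inter> {t0-\<epsilon><..<t0+\<epsilon>}. \<forall>z\<in>ball 0 \<epsilon>.
                 ((\<lambda>s. S s z) has_vector_derivative
                    ((2 * complex_of_real (lam*th) * z + 1) * S t z
                     - complex_of_real th * (1 + 2 * complex_of_real lam * z) * (S t z)^2
                     - complex_of_real th * z * (1 + complex_of_real lam * z) / 2
                         * deriv (\<lambda>w. (S t w)^2) z))
                 (at t within {0..})))"
proof -
  interpret jacobi_moments lam th m
    using m0 m_bound pde by unfold_locales
  show ?thesis
    using S_transform_evolution_near[unfolded S_rhs_def] m1_nz by blast
qed

end
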